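(* Let $\mathcal{C}\subset S^{n-1}\subset\mathbb{R}^n$ be a spherical code whose angle set $\mathcal{A}_{\mathcal{C}}$ consists of rational numbers and such that $\mathcal{C}$ spans $\mathbb{R}^n$. Then there exist an integer $q\geq n$, a natural number $m$, a real number $\lambda>0$ and a linear isometric embedding $\iota:\mathbb{R}^n\to\mathbb{R}^q$ such that $\lambda\,\iota(\mathcal{C})\subseteq s_m$, where $s_m$ is the shell of squared norm $m$ of the integer lattice $\mathbb{Z}^q$.
   Context: A spherical code is a finite set of points on the unit sphere $S^{n-1}\subset\mathbb{R}^n$. Its angle set is $\mathcal{A}_{\mathcal{C}}=\{\langle x,y\rangle: x,y\in\mathcal{C},\,x\neq y\}$ (standard inner product). $\mathbb{Z}^q$ is the lattice of integer vectors in $\mathbb{R}^q$, and its shell $s_m$ is $\{v\in\mathbb{Z}^q:\|v\|^2=m\}$. *)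

theory Defs
  imports "HOL-Analysis.Analysis"
begin

text \<open>Vectors of R^q are represented as functions nat => real supported on {..<q}.\<close>

definition lin_isometric_embedding :: "nat \<Rightarrow> (real^'n \<Rightarrow> (nat \<Rightarrow> real)) \<Rightarrow> bool" where
  "lin_isometric_embedding q \<iota> \<longleftrightarrow>
     (\<forall>i<q. linear (\<lambda>x. \<iota> x i)) \<and>
     (\<forall>x. \<forall>i\<ge>q. \<iota> x i = 0) \<and>
     (\<forall>x y. (\<Sum>i<q. (\<iota> x i - \<iota> y i)^2) = (dist x y)^2)"

definition lattice_shell :: "nat \<Rightarrow> nat \<Rightarrow> (nat \<Rightarrow> real) set" where
  "lattice_shell q m = {v. \<exists>z::nat \<Rightarrow> int. (\<forall>i<q. v i = of_int (z i)) \<and> (\<forall>i\<ge>q. v i = 0)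
                            \<and> (\<Sum>i<q. (z i)^2) = int m}"

end

theory Submission
  imports Defs
begin

text \<open>
  Gram--Schmidt applied to \<open>C\<close> never leaves the \<open>\<rat>\<close>-span of \<open>C\<close>, in which all inner
  products are rational, so it yields an orthogonal basis \<open>U\<close> of \<open>\<real>\<^sup>n\<close> with \<open>u \<bullet> u \<in> \<rat>\<close>.
  Rescaling each \<open>u\<close> by a rational factor to \<open>v\<^sub>u\<close> with \<open>v\<^sub>u \<bullet> v\<^sub>u = 1 / N\<^sub>u\<close>, \<open>N\<^sub>u \<in> \<nat>\<close>,
  and repeating \<open>v\<^sub>u\<close> exactly \<open>N\<^sub>u\<close> times gives a list \<open>L\<close> with
  \<open>\<Sum>\<^sub>j (z \<bullet> L\<^sub>j)\<^sup>2 = z \<bullet> z\<close>, i.e. \<open>z \<mapsto> (z \<bullet> L\<^sub>j)\<^sub>j\<close> is a linear isometric embedding.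
  The coordinates \<open>c \<bullet> L\<^sub>j\<close> of the code vectors are rational; multiplying by a common
  denominator \<open>D\<close> makes them integral, and the images lie on the shell of norm \<open>D\<^sup>2\<close>.
\<close>

definition rat_span :: "'a::real_vector set \<Rightarrow> 'a set" where
  "rat_span C = {x. \<exists>a. (\<forall>c\<in>C. a c \<in> \<rat>) \<and> x = (\<Sum>c\<in>C. a c *\<^sub>R c)}"

lemma rat_span_zero: "0 \<in> rat_span C"
  unfolding rat_span_def by (intro CollectI exI[of _ "\<lambda>c. 0"]) auto

lemma rat_span_add:
  assumes "x \<in> rat_span C" "y \<in> rat_span C"
  shows "x + y \<in> rat_span C"
proof -
  obtain a b where "\<forall>c\<in>C. a c \<in> \<rat>" "x = (\<Sum>c\<in>C. a c *\<^sub>R c)"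
    "\<forall>c\<in>C. b c \<in> \<rat>" "y = (\<Sum>c\<in>C. b c *\<^sub>R c)"
    using assms by (auto simp: rat_span_def)
  then show ?thesis
    unfolding rat_span_def
    by (intro CollectI exI[of _ "\<lambda>c. a c + b c"]) (auto simp: scaleR_add_left sum.distrib)
qed

lemma rat_span_scaleR:
  assumes "x \<in> rat_span C" "t \<in> \<rat>"
  shows "t *\<^sub>R x \<in> rat_span C"
proof -
  obtain a where "\<forall>c\<in>C. a c \<in> \<rat>" "x = (\<Sum>c\<in>C. a c *\<^sub>R c)"
    using assms(1) by (auto simp: rat_span_def)
  then show ?thesis
    unfolding rat_span_def using assms(2)
    by (intro CollectI exI[of _ "\<lambda>c. t * a c"]) (auto simp: scaleR_sum_right)
qed

lemma rat_span_diff: "x \<in> rat_span C \<Longrightarrow> y \<in> rat_span C \<Longrightarrow> x - y \<in> rat_span C"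
  using rat_span_add[of x C "(-1) *\<^sub>R y"] rat_span_scaleR[of y C "-1"] by simp

lemma rat_span_sum:
  "(\<And>s. s \<in> S \<Longrightarrow> f s \<in> rat_span C) \<Longrightarrow> sum f S \<in> rat_span C"
  by (induction S rule: infinite_finite_induct) (auto intro: rat_span_add rat_span_zero)

lemma rat_span_superset: "finite C \<Longrightarrow> C \<subseteq> rat_span C"
proof
  fix c assume "finite C" "c \<in> C"
  then have "c = (\<Sum>d\<in>C. if d = c then d else 0)"
    by simp
  also have "\<dots> = (\<Sum>d\<in>C. (if d = c then 1 else 0) *\<^sub>R d)"
    by (rule sum.cong) auto
  finally show "c \<in> rat_span C"
    unfolding rat_span_def by (intro CollectI exI[of _ "\<lambda>d. if d = c then 1 else 0"]) auto
qed

lemma rat_span_inner_Rats: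
  assumes "\<forall>c\<in>C. \<forall>d\<in>C. c \<bullet> d \<in> \<rat>" "x \<in> rat_span C" "y \<in> rat_span C"
  shows "x \<bullet> y \<in> \<rat>"
  using assms
  by (auto simp: rat_span_def inner_sum_left inner_sum_right intro!: Rats_sum Rats_mult)

lemma rat_span_orthogonal_basis:
  fixes C :: "'a::euclidean_space set"
  assumes "finite T" "T \<subseteq> rat_span C" and rat: "\<forall>c\<in>C. \<forall>d\<in>C. c \<bullet> d \<in> \<rat>"
  shows "\<exists>U. finite U \<and> U \<subseteq> rat_span C \<and> pairwise orthogonal U \<and> 0 \<notin> U \<and> span U = span T"
  using assms(1,2)
proof (induction T rule: finite_induct)
  case empty
  show ?case by (intro exI[of _ "{}"]) auto
next
  case (insert x T)
  then obtain U where U: "finite U" "U \<subseteq> rat_span C" "pairwise orthogonal U" "0 \<notin> U"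
    "span U = span T" by auto
  have x: "x \<in> rat_span C" using insert.prems by auto
  show ?case
  proof (cases "x \<in> span U")
    case True
    then have "span (insert x T) = span T" using U(5) by (simp add: span_redundant)
    then have "span U = span (insert x T)" using U(5) by simp
    with U(1-4) show ?thesis by blast
  next
    case False
    define p where "p = (\<Sum>b\<in>U. (b \<bullet> x / (b \<bullet> b)) *\<^sub>R b)"
    define x' where "x' = x - p"
    have "p \<in> span U"
      unfolding p_def by (intro span_sum span_mul span_base)
    have "x' \<noteq> 0"
    proof
      assume "x' = 0"
      then have "x = p" by (simp add: x'_def)
      with False \<open>p \<in> span U\<close> show False by simp
    qed
    have "p \<in> rat_span C"
      unfolding p_def
    proof (rule rat_span_sum)
      fix b assume "b \<in> U"
      then have b: "b \<in> rat_span C" using U(2) by blast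
      show "(b \<bullet> x / (b \<bullet> b)) *\<^sub>R b \<in> rat_span C"
        using rat_span_inner_Rats[OF rat b x] rat_span_inner_Rats[OF rat b b]
        by (intro rat_span_scaleR[OF b] Rats_divide)
    qed
    then have "x' \<in> rat_span C"
      unfolding x'_def by (rule rat_span_diff[OF x])
    have "orthogonal u x'" if "u \<in> U" for u
      unfolding x'_def p_def by (rule Gram_Schmidt_step[OF U(3)]) (use that in \<open>auto intro: span_base\<close>)
    then have "pairwise orthogonal (insert x' U)"
      using U(3) by (intro pairwise_orthogonal_insert) (auto simp: orthogonal_commute)
    moreover have "span (insert x' U) = span (insert x T)"
    proof -
      have "span (insert x' U) = span (insert x U)"
        unfolding x'_def by (rule eq_span_insert_eq) (use \<open>p \<in> span U\<close> in \<open>simp add: span_neg\<close>)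
      also have "\<dots> = span (insert x T)" using U(5) by (simp add: span_insert)
      finally show ?thesis .
    qed
    ultimately show ?thesis
      using U(1,2,4) \<open>x' \<noteq> 0\<close> \<open>x' \<in> rat_span C\<close> by (intro exI[of _ "insert x' U"] conjI) auto
  qed
qed

lemma Rats_pos_unit_fraction_multiple:
  assumes "r \<in> \<rat>" "r > 0"
  obtains t :: real and N :: nat where "t \<in> \<rat>" "t\<^sup>2 * r * N = 1"
proof -
  obtain a b where ab: "b > 0" "r = of_int a / of_int b" using assms(1) by (rule Rats_cases')
  then have "a > 0" using assms(2) by (simp add: zero_less_divide_iff)
  then have "(1 / of_int a)\<^sup>2 * r * real (nat (a * b)) = 1"
    using ab by (simp add: power2_eq_square field_simps)
  then show ?thesis by (intro that[of "1 / of_int a"]) auto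
qed

lemma inner_self_orthogonal_basis:
  fixes U :: "'a::euclidean_space set"
  assumes "finite U" "pairwise orthogonal U" "0 \<notin> U" "span U = UNIV"
  shows "z \<bullet> z = (\<Sum>u\<in>U. (z \<bullet> u)\<^sup>2 / (u \<bullet> u))"
proof -
  obtain a where z: "z = (\<Sum>v\<in>U. a v *\<^sub>R v)"
    using span_finite[OF assms(1)] assms(4) by blast
  have coef: "z \<bullet> w = a w * (w \<bullet> w)" if "w \<in> U" for w
  proof -
    have "z \<bullet> w = (\<Sum>v\<in>U. if v = w then a w * (w \<bullet> w) else 0)"
      unfolding z inner_sum_left
      using assms(2) that by (intro sum.cong) (auto simp: pairwise_def orthogonal_def)
    then show ?thesis using assms(1) that by simp
  qed
  have "z \<bullet> z = (\<Sum>v\<in>U. a v * (z \<bullet> v))"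
    by (subst (2) z) (simp add: inner_sum_right)
  also have "\<dots> = (\<Sum>u\<in>U. (z \<bullet> u)\<^sup>2 / (u \<bullet> u))"
    using assms(3) coef by (intro sum.cong refl) (auto simp: power2_eq_square)
  finally show ?thesis .
qed

lemma sum_list_map_concat_replicate:
  "sum_list (map g (concat (map (\<lambda>u. replicate (N u) (f u)) us)))
     = (\<Sum>u\<leftarrow>us. of_nat (N u) * g (f u))"
  by (induction us) (simp_all add: sum_list_replicate)

lemma sum_lessThan_length_nth: "(\<Sum>j<length xs. g (xs ! j)) = sum_list (map g xs)"
  using sum_list_sum_nth[of "map g xs"] by (simp add: atLeast0LessThan)

lemma tight_frame_from_orthogonal_basis:
  fixes U :: "'a::euclidean_space set"
  assumes "finite U" "pairwise orthogonal U" "0 \<notin> U" "span U = UNIV"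
    and rat: "\<forall>u\<in>U. u \<bullet> u \<in> \<rat>"
  obtains L where "\<forall>v\<in>set L. \<exists>t\<in>\<rat>. \<exists>u\<in>U. v = t *\<^sub>R u"
    and "\<And>z. (\<Sum>j<length L. (z \<bullet> L ! j)\<^sup>2) = z \<bullet> z"
proof -
  have "\<forall>u\<in>U. \<exists>t N. t \<in> \<rat> \<and> t\<^sup>2 * (u \<bullet> u) * real N = 1"
    using rat assms(3) by (metis Rats_pos_unit_fraction_multiple inner_gt_zero_iff)
  then obtain t N where tN: "\<forall>u\<in>U. t u \<in> \<rat> \<and> (t u)\<^sup>2 * (u \<bullet> u) * real (N u) = 1"
    by metis
  obtain us where us: "set us = U" "distinct us"
    using finite_distinct_list[OF assms(1)] by blast
  define L where "L = concat (map (\<lambda>u. replicate (N u) (t u *\<^sub>R u)) us)"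
  have "(\<Sum>j<length L. (z \<bullet> L ! j)\<^sup>2) = z \<bullet> z" for z
  proof -
    have "(\<Sum>j<length L. (z \<bullet> L ! j)\<^sup>2) = (\<Sum>u\<in>U. real (N u) * (z \<bullet> (t u *\<^sub>R u))\<^sup>2)"
      unfolding sum_lessThan_length_nth[where g = "\<lambda>v. (z \<bullet> v)\<^sup>2"] L_def
        sum_list_map_concat_replicate
      using us by (simp add: sum_list_distinct_conv_sum_set)
    also have "\<dots> = (\<Sum>u\<in>U. (z \<bullet> u)\<^sup>2 / (u \<bullet> u))"
    proof (intro sum.cong refl)
      fix u assume "u \<in> U"
      moreover from this have "u \<bullet> u \<noteq> 0"
        using assms(3) by auto
      ultimately have "real (N u) * (t u)\<^sup>2 = 1 / (u \<bullet> u)"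
        using tN by (simp add: field_simps)
      then show "real (N u) * (z \<bullet> (t u *\<^sub>R u))\<^sup>2 = (z \<bullet> u)\<^sup>2 / (u \<bullet> u)"
        by (simp add: power_mult_distrib mult.assoc[symmetric])
    qed
    also have "\<dots> = z \<bullet> z"
      by (rule inner_self_orthogonal_basis[OF assms(1-4), symmetric])
    finally show ?thesis .
  qed
  moreover have "\<forall>v\<in>set L. \<exists>t\<in>\<rat>. \<exists>u\<in>U. v = t *\<^sub>R u"
    unfolding L_def using us tN by auto
  ultimately show ?thesis using that by blast
qed

lemma rat_span_tight_frame:
  fixes C :: "'a::euclidean_space set"
  assumes "finite C" and rat: "\<forall>c\<in>C. \<forall>d\<in>C. c \<bullet> d \<in> \<rat>" and "span C = UNIV"
  obtains L where "set L \<subseteq> rat_span C" and "\<And>z. (\<Sum>j<length L. (z \<bullet> L ! j)\<^sup>2) = z \<bullet> z"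
proof -
  obtain U where U: "finite U" "U \<subseteq> rat_span C" "pairwise orthogonal U" "0 \<notin> U" "span U = UNIV"
    using rat_span_orthogonal_basis[OF assms(1) rat_span_superset[OF assms(1)] rat] assms(3) by auto
  have "\<forall>u\<in>U. u \<bullet> u \<in> \<rat>"
    using U(2) rat_span_inner_Rats[OF rat] by blast
  then obtain L where L: "\<forall>v\<in>set L. \<exists>t\<in>\<rat>. \<exists>u\<in>U. v = t *\<^sub>R u"
    and tight: "\<And>z. (\<Sum>j<length L. (z \<bullet> L ! j)\<^sup>2) = z \<bullet> z"
    using tight_frame_from_orthogonal_basis[OF U(1,3-5)] by blast
  have "set L \<subseteq> rat_span C"
  proof
    fix v assume "v \<in> set L"
    then obtain t u where "t \<in> \<rat>" "u \<in> U" "v = t *\<^sub>R u"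
      using L by blast
    then show "v \<in> rat_span C" using U(2) by (simp add: rat_span_scaleR subsetD)
  qed
  with tight show ?thesis using that by blast
qed

definition frame_coords :: "'a::real_inner list \<Rightarrow> 'a \<Rightarrow> nat \<Rightarrow> real" where
  "frame_coords L x j = (if j < length L then x \<bullet> L ! j else 0)"

lemma sum_frame_coords:
  assumes "length L \<le> q" "f 0 = (0::real)"
  shows "(\<Sum>i<q. f (frame_coords L x i)) = (\<Sum>j<length L. f (x \<bullet> L ! j))"
proof -
  have "(\<Sum>i<q. f (frame_coords L x i)) = (\<Sum>i<length L. f (frame_coords L x i))"
    using assms by (intro sum.mono_neutral_right) (auto simp: frame_coords_def)
  then show ?thesis by (simp add: frame_coords_def)
qed

lemma lin_isometric_embedding_frame_coords:
  fixes L :: "(real^'n) list"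
  assumes "length L \<le> q" and tight: "\<And>z. (\<Sum>j<length L. (z \<bullet> L ! j)\<^sup>2) = z \<bullet> z"
  shows "lin_isometric_embedding q (frame_coords L)"
  unfolding lin_isometric_embedding_def
proof (intro conjI allI impI)
  fix i show "linear (\<lambda>x. frame_coords L x i)"
    by (cases "i < length L")
      (simp_all add: frame_coords_def linear_zero bounded_linear.linear[OF bounded_linear_inner_left])
next
  fix x :: "real^'n" and i :: nat assume "q \<le> i"
  then show "frame_coords L x i = 0" using assms(1) by (simp add: frame_coords_def)
next
  fix x y :: "real^'n"
  have "frame_coords L x i - frame_coords L y i = frame_coords L (x - y) i" for i
    by (simp add: frame_coords_def inner_diff_left)
  then have "(\<Sum>i<q. (frame_coords L x i - frame_coords L y i)\<^sup>2) = (x - y) \<bullet> (x - y)"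
    using sum_frame_coords[OF assms(1), of "\<lambda>t. t\<^sup>2"] tight by simp
  then show "(\<Sum>i<q. (frame_coords L x i - frame_coords L y i)\<^sup>2) = (dist x y)\<^sup>2"
    by (simp add: dist_norm power2_norm_eq_inner)
qed

lemma scaled_frame_coords_in_lattice_shell:
  assumes "length L \<le> q" and tight: "\<And>z. (\<Sum>j<length L. (z \<bullet> L ! j)\<^sup>2) = z \<bullet> z"
    and int: "\<forall>j<length L. r * (c \<bullet> L ! j) \<in> \<int>" and norm: "r\<^sup>2 * (c \<bullet> c) = real m"
  shows "(\<lambda>i. r * frame_coords L c i) \<in> lattice_shell q m"
proof -
  define z where "z i = \<lfloor>r * frame_coords L c i\<rfloor>" for i
  have z: "r * frame_coords L c i = of_int (z i)" for i
    using int by (cases "i < length L") (auto simp: z_def frame_coords_def elim!: Ints_cases)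
  have "real_of_int (\<Sum>i<q. (z i)\<^sup>2) = (\<Sum>i<q. (r * frame_coords L c i)\<^sup>2)"
    by (simp add: z)
  also have "\<dots> = r\<^sup>2 * (\<Sum>j<length L. (c \<bullet> L ! j)\<^sup>2)"
    using sum_frame_coords[OF assms(1), of "\<lambda>t. (r * t)\<^sup>2"]
    by (simp add: sum_distrib_left power_mult_distrib)
  also have "\<dots> = real m" using tight norm by simp
  finally have "(\<Sum>i<q. (z i)\<^sup>2) = int m" by linarith
  moreover have "\<forall>i\<ge>q. r * frame_coords L c i = 0"
    using assms(1) by (simp add: frame_coords_def)
  ultimately show ?thesis unfolding lattice_shell_def using z by blast
qed

lemma Rats_common_denominator:
  assumes "finite I" "\<forall>i\<in>I. f i \<in> \<rat>"
  obtains D :: nat where "D > 0" "\<forall>i\<in>I. real D * f i \<in> \<int>"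
  using assms
proof (induction I arbitrary: thesis rule: finite_induct)
  case empty
  show ?case by (rule empty.prems(1)[of 1]) auto
next
  case (insert i I)
  obtain D where D: "D > 0" "\<forall>k\<in>I. real D * f k \<in> \<int>"
    using insert.IH insert.prems(2) by auto
  obtain a b where ab: "b > 0" "f i = of_int a / of_int b"
    using insert.prems(2) by (auto elim: Rats_cases')
  have "real (D * nat b) * f i = of_int (int D * a)"
    using ab by (simp add: field_simps)
  then have "real (D * nat b) * f i \<in> \<int>"
    by (simp only: Ints_of_int)
  moreover have "real (D * nat b) * f k \<in> \<int>" if "k \<in> I" for k
  proof -
    have "real D * f k \<in> \<int>"
      using D(2) that by blast
    then have "real (nat b) * (real D * f k) \<in> \<int>"
      by (rule Ints_mult[OF Ints_of_nat])
    then show ?thesis by (simp only: of_nat_mult mult.left_commute mult.assoc)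
  qed
  ultimately show ?case
    using D(1) ab(1) by (intro insert.prems(1)[of "D * nat b"]) auto
qed

theorem proposition2:
  fixes C :: "(real^'n) set"
  assumes "finite C"
    and "C \<subseteq> sphere 0 1"
    and "\<forall>x\<in>C. \<forall>y\<in>C. x \<noteq> y \<longrightarrow> x \<bullet> y \<in> \<rat>"
    and "span C = UNIV"
  shows "\<exists>(q::nat) (m::nat) (r::real) \<iota>. q \<ge> CARD('n) \<and> r > 0 \<and>
           lin_isometric_embedding q \<iota> \<and>
           (\<lambda>c i. r * \<iota> c i) ` C \<subseteq> lattice_shell q m"
proof -
  have unit: "c \<bullet> c = 1" if "c \<in> C" for c
    using assms(2) that by (auto simp: dot_square_norm)
  then have rat: "\<forall>c\<in>C. \<forall>d\<in>C. c \<bullet> d \<in> \<rat>"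
    using assms(3) by (metis Rats_1)
  obtain L where L: "set L \<subseteq> rat_span C" and tight: "\<And>z. (\<Sum>j<length L. (z \<bullet> L ! j)\<^sup>2) = z \<bullet> z"
    using rat_span_tight_frame[OF assms(1) rat assms(4)] by blast
  have "c \<bullet> L ! j \<in> \<rat>" if "c \<in> C" "j < length L" for c j
    using rat_span_inner_Rats[OF rat] rat_span_superset[OF assms(1)] L nth_mem that by blast
  then obtain D :: nat where "D > 0"
    and D: "\<forall>(c, j)\<in>C \<times> {..<length L}. real D * (c \<bullet> L ! j) \<in> \<int>"
    using Rats_common_denominator[of "C \<times> {..<length L}" "\<lambda>(c, j). c \<bullet> L ! j"] assms(1)
    by auto
  define q where "q = max (length L) CARD('n)"
  have "length L \<le> q" by (simp add: q_def)
  have "lin_isometric_embedding q (frame_coords L)"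
    using \<open>length L \<le> q\<close> tight by (rule lin_isometric_embedding_frame_coords)
  moreover have "(\<lambda>c i. real D * frame_coords L c i) ` C \<subseteq> lattice_shell q (D\<^sup>2)"
    using scaled_frame_coords_in_lattice_shell[OF \<open>length L \<le> q\<close> tight] D unit by force
  moreover have "CARD('n) \<le> q" by (simp add: q_def)
  ultimately show ?thesis
    using \<open>D > 0\<close> by (intro exI[of _ q] exI[of _ "D\<^sup>2"] exI[of _ "real D"] exI[of _ "frame_coords L"] conjI)
      simp_all
qed

end
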